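(* Let $M$ be a commutative monoid and $\mathcal{A}$ an $\mathbb{H}M$-module. For every $r\ge2$, $H^r(M,r;\mathcal{A})\cong H^1(M,1;\mathcal{A})$.
   Context: Let $M$ be a commutative monoid with identity $e$. $\mathbb{H}M$ has objects the elements of $M$ and morphisms $(x,y):x\to xy$, composition $(xy,z)(x,y)=(x,yz)$. An $\mathbb{H}M$-module $\mathcal{A}$ is a functor $\mathbb{H}M\to\mathbf{Ab}$: groups $\mathcal{A}(x)$ with $y_*:\mathcal{A}(x)\to\mathcal{A}(xy)$, $y_*z_*=(yz)_*$, $e_*=\mathrm{id}$. Tensor product $(\mathcal{A}\otimes_{\mathbb{H}M}\mathcal{B})(x)=\bigoplus_{zt=x}\mathcal{A}(z)\otimes\mathcal{B}(t)/(u_*a\otimes b=a\otimes u_*b)$; unit the constant module $\mathbb{Z}$; chain complexes of $\mathbb{H}M$-modules form a symmetric monoidal category with Koszul signs. A commutative DGA-algebra over $\mathbb{H}M$ is a commutative monoid $(\mathcal{A},\circ,\iota)$ there with a monoid morphism $\epsilon:\mathcal{A}\to\mathbb{Z}$, $\epsilon_x(a)=\tilde\epsilon(a)x$. Its reduced bar construction $\mathbf{B}(\mathcal{A})$ has $\mathbf{B}(\mathcal{A})_n(x)$ generated by $[\,]$ (degree $0$) and $[a_1|\cdots|a_p]$ with $a_i\in(\mathrm{coker}\,\iota)_{r_i}(x_i)$, $x_1\cdots x_p=x$, $p+\sum r_i=n$; differential $\partial[a_1|\cdots|a_p]=-\sum_i(-1)^{e_{i-1}}[\cdots|\partial a_i|\cdots]+\tilde\epsilon(a_1)x_{1*}[a_2|\cdots]+\sum_{i<p}(-1)^{e_i}[\cdots|a_i\circ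 a_{i+1}|\cdots]+(-1)^{e_p}\tilde\epsilon(a_p)x_{p*}[\cdots|a_{p-1}]$, $e_i=i+r_1+\cdots+r_i$; multiplication the signed shuffle product $[a_1|\cdots|a_p]\circ[a_{p+1}|\cdots|a_{p+q}]=\sum_\sigma(-1)^{e(\sigma)}[a_{\sigma^{-1}(1)}|\cdots|a_{\sigma^{-1}(p+q)}]$, $e(\sigma)=\sum_{\sigma(i)>\sigma(p+j)}(1+r_i)(1+r_{p+j})$; unit $[\,]$; augmentation $\mathbf{B}(\mathcal{A})_0\cong\mathbb{Z}$. It is again such an algebra, so $\mathbf{B}^r$ is defined. $\mathcal{Z}M$: $\mathcal{Z}M(x)$ free abelian on $\{(u,v):uv=x\}$, $y_*(u,v)=(yu,v)$, $(u,v)\circ(w,t)=(uw,vt)$, unit $(e,e)$, degree $0$, augmentation $(u,v)\mapsto$ generator of $\mathbb{Z}(x)$. $H^n(M,r;\mathcal{A})=H^n(\mathrm{Hom}_{\mathbb{H}M}(\mathbf{B}^r(\mathcal{Z}M),\mathcal{A}))$. *)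

theory Defs
  imports "HOL-Library.Poly_Mapping" "HOL-Algebra.Coset"
begin

text \<open>An HM-module A is given by abelian groups A(x) (HOL-Algebra groups Ag x, all with
  elements in one ambient type) together with the maps y_* : A(x) \<rightarrow> A(xy),
  written Ap x y, satisfying y_* z_* = (yz)_* and e_* = id.\<close>

definition HM_module :: "('m::comm_monoid_mult \<Rightarrow> 'a monoid) \<Rightarrow> ('m \<Rightarrow> 'm \<Rightarrow> 'a \<Rightarrow> 'a) \<Rightarrow> bool" where
  "HM_module Ag Ap \<longleftrightarrow>
     (\<forall>x. comm_group (Ag x)) \<and>
     (\<forall>x y. Ap x y \<in> hom (Ag x) (Ag (x * y))) \<and>
     (\<forall>x a. a \<in> carrier (Ag x) \<longrightarrow> Ap x 1 a = a) \<and>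
     (\<forall>x y z a. a \<in> carrier (Ag x) \<longrightarrow> Ap (x * y) z (Ap x y a) = Ap x (y * z) a)"

text \<open>All algebras B^k(ZM) are free HM-modules.  A basis element u_* g of B^k(ZM)(x)
  is represented by a pair (u, g) with u * wt g = x, where g is a generator:
  at level 0, Z v stands for (e,v) \<in> ZM(v); at level k+1, W [g1,...,gp] stands for the
  bar word [g1|...|gp] of non-unit level-k generators (these form a basis of coker \<iota>).\<close>

datatype 'm gen = Z 'm | W "'m gen list"

fun glist :: "'m gen \<Rightarrow> 'm gen list" where
  "glist (W gs) = gs"
| "glist (Z v) = []"

fun zval :: "'m gen \<Rightarrow> 'm" where
  "zval (Z v) = v"
| "zval (W gs) = undefined"

fun wt :: "'m::comm_monoid_mult gen \<Rightarrow> 'm" where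
  "wt (Z v) = v"
| "wt (W gs) = prod_list (map wt gs)"

fun deg :: "'m gen \<Rightarrow> nat" where
  "deg (Z v) = 0"
| "deg (W gs) = length gs + sum_list (map deg gs)"

definition isunit :: "nat \<Rightarrow> 'm::comm_monoid_mult gen \<Rightarrow> bool" where
  "isunit k g = (if k = 0 then g = Z 1 else g = W [])"

fun valid :: "nat \<Rightarrow> 'm::comm_monoid_mult gen \<Rightarrow> bool" where
  "valid 0 g = (\<exists>v. g = Z v)"
| "valid (Suc k) g = (\<exists>gs. g = W gs \<and> (\<forall>h\<in>set gs. valid k h \<and> \<not> isunit k h))"

definition eps :: "nat \<Rightarrow> 'm gen \<Rightarrow> int" where
  "eps k g = (if k = 0 then 1 else if glist g = [] then 1 else 0)"

text \<open>Signed shuffles: sign (-1)^e(\<sigma>) with e(\<sigma>) = sum over inversions of (1+r_i)(1+r_{p+j}).\<close>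
fun shuf :: "'m gen list \<Rightarrow> 'm gen list \<Rightarrow> (int \<times> 'm gen list) list" where
  "shuf [] ys = [(1, ys)]"
| "shuf (x # xs) [] = [(1, x # xs)]"
| "shuf (x # xs) (y # ys) =
     map (\<lambda>(s, l). (s, x # l)) (shuf xs (y # ys)) @
     map (\<lambda>(s, l). ((-1) ^ ((1 + deg y) * sum_list (map (\<lambda>z. 1 + deg z) (x # xs))) * s, y # l))
       (shuf (x # xs) ys)"

type_synonym 'm chain = "('m \<times> 'm gen) \<Rightarrow>\<^sub>0 int"

definition gmul :: "nat \<Rightarrow> 'm::comm_monoid_mult gen \<Rightarrow> 'm gen \<Rightarrow> 'm chain" where
  "gmul k g h =
    (if k = 0 then frag_of (1, Z (zval g * zval h))
     else sum_list (map (\<lambda>(s, l). frag_cmul s (frag_of (1, W l))) (shuf (glist g) (glist h))))"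

definition pushc :: "'m::comm_monoid_mult \<Rightarrow> 'm chain \<Rightarrow> 'm chain" where
  "pushc y c = frag_extend (\<lambda>(u, g). frag_of (y * u, g)) c"

definition Eidx :: "'m gen list \<Rightarrow> nat \<Rightarrow> nat" where
  "Eidx gs j = j + sum_list (map deg (take j gs))"

text \<open>Differential of a generator at level k (bar differential at levels k \<ge> 1;
  components equal to the unit of the previous level vanish in coker \<iota>).\<close>
primrec bdg :: "nat \<Rightarrow> 'm::comm_monoid_mult gen \<Rightarrow> 'm chain" where
  "bdg 0 g = 0"
| "bdg (Suc k) g =
    (let gs = glist g; p = length gs in
      frag_cmul (-1) (sum_list (map (\<lambda>i. frag_cmul ((-1) ^ Eidx gs i)
          (frag_extend (\<lambda>(u, h). if isunit k h then 0 else frag_of (u, W (gs[i := h])))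
             (bdg k (gs ! i)))) [0..<p]))
    + (if p = 0 then 0 else frag_cmul (eps k (hd gs)) (frag_of (wt (hd gs), W (tl gs))))
    + sum_list (map (\<lambda>i. frag_cmul ((-1) ^ Eidx gs (Suc i))
          (frag_extend (\<lambda>(u, h). if isunit k h then 0
                                  else frag_of (u, W (take i gs @ h # drop (Suc (Suc i)) gs)))
             (gmul k (gs ! i) (gs ! Suc i)))) [0..<p - 1])
    + (if p = 0 then 0 else frag_cmul ((-1) ^ Eidx gs p * eps k (last gs))
                                      (frag_of (wt (last gs), W (butlast gs)))))"

definition bdc :: "nat \<Rightarrow> 'm::comm_monoid_mult chain \<Rightarrow> 'm chain" where
  "bdc r c = frag_extend (\<lambda>(u, g). pushc u (bdg r g)) c"

definition Bcar :: "nat \<Rightarrow> nat \<Rightarrow> 'm::comm_monoid_mult \<Rightarrow> 'm chain set" where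
  "Bcar r n x = {c. \<forall>(u, g) \<in> Poly_Mapping.keys c. valid r g \<and> deg g = n \<and> u * wt g = x}"

definition Bgrp :: "nat \<Rightarrow> nat \<Rightarrow> 'm::comm_monoid_mult \<Rightarrow> 'm chain monoid" where
  "Bgrp r n x = \<lparr>carrier = Bcar r n x, mult = (+), one = 0\<rparr>"

definition Cochains :: "nat \<Rightarrow> nat \<Rightarrow> ('m::comm_monoid_mult \<Rightarrow> 'a monoid) \<Rightarrow> ('m \<Rightarrow> 'm \<Rightarrow> 'a \<Rightarrow> 'a)
    \<Rightarrow> ('m \<Rightarrow> 'm chain \<Rightarrow> 'a) set" where
  "Cochains r n Ag Ap = {f.
     (\<forall>x. f x \<in> hom (Bgrp r n x) (Ag x)) \<and>
     (\<forall>x y c. c \<in> Bcar r n x \<longrightarrow> f (x * y) (pushc y c) = Ap x y (f x c)) \<and>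
     (\<forall>x c. c \<notin> Bcar r n x \<longrightarrow> f x c = undefined)}"

definition Cgrp :: "nat \<Rightarrow> nat \<Rightarrow> ('m::comm_monoid_mult \<Rightarrow> 'a monoid) \<Rightarrow> ('m \<Rightarrow> 'm \<Rightarrow> 'a \<Rightarrow> 'a)
    \<Rightarrow> ('m \<Rightarrow> 'm chain \<Rightarrow> 'a) monoid" where
  "Cgrp r n Ag Ap =
    \<lparr>carrier = Cochains r n Ag Ap,
     mult = (\<lambda>f g. \<lambda>x c. if c \<in> Bcar r n x then f x c \<otimes>\<^bsub>Ag x\<^esub> g x c else undefined),
     one = (\<lambda>x c. if c \<in> Bcar r n x then \<one>\<^bsub>Ag x\<^esub> else undefined)\<rparr>"

definition cobd :: "nat \<Rightarrow> nat \<Rightarrow> ('m::comm_monoid_mult \<Rightarrow> 'm chain \<Rightarrow> 'a) \<Rightarrow> ('m \<Rightarrow> 'm chain \<Rightarrow> 'a)" where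
  "cobd r n f = (\<lambda>x c. if c \<in> Bcar r (Suc n) x then f x (bdc r c) else undefined)"

definition cocycles :: "nat \<Rightarrow> nat \<Rightarrow> ('m::comm_monoid_mult \<Rightarrow> 'a monoid) \<Rightarrow> ('m \<Rightarrow> 'm \<Rightarrow> 'a \<Rightarrow> 'a)
    \<Rightarrow> ('m \<Rightarrow> 'm chain \<Rightarrow> 'a) set" where
  "cocycles r n Ag Ap = {f \<in> Cochains r n Ag Ap. cobd r n f = \<one>\<^bsub>Cgrp r (Suc n) Ag Ap\<^esub>}"

definition coboundaries :: "nat \<Rightarrow> nat \<Rightarrow> ('m::comm_monoid_mult \<Rightarrow> 'a monoid) \<Rightarrow> ('m \<Rightarrow> 'm \<Rightarrow> 'a \<Rightarrow> 'a)
    \<Rightarrow> ('m \<Rightarrow> 'm chain \<Rightarrow> 'a) set" where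
  "coboundaries r n Ag Ap =
    (case n of 0 \<Rightarrow> {\<one>\<^bsub>Cgrp r 0 Ag Ap\<^esub>} | Suc m \<Rightarrow> cobd r m ` Cochains r m Ag Ap)"

definition HMcoh :: "nat \<Rightarrow> nat \<Rightarrow> ('m::comm_monoid_mult \<Rightarrow> 'a monoid) \<Rightarrow> ('m \<Rightarrow> 'm \<Rightarrow> 'a \<Rightarrow> 'a)
    \<Rightarrow> ('m \<Rightarrow> 'm chain \<Rightarrow> 'a) set monoid" where
  "HMcoh n r Ag Ap = (Cgrp r n Ag Ap)\<lparr>carrier := cocycles r n Ag Ap\<rparr> Mod coboundaries r n Ag Ap"

end

theory Submission
  imports Defs
begin

text \<open>
  For k \<ge> 0, a bar word at level k+2 with two or more letters has degree at least 2(k+2), so the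
  generators of B^{k+1}(ZM) in degrees k+1 and k+2 are exactly the iterated one-letter brackets
  [[\<dots>[w]\<dots>]] (k pairs) of the generators w = [v] and w = [a|b] (v, a, b \<noteq> 1) of B^1(ZM).
  Bracketing is compatible with the HM-action and commutes with the differential up to the sign
  (-1)^k, so precomposition with it identifies the (k+1)-cocycles of Hom(B^{k+1}(ZM), A) with the
  1-cocycles of Hom(B^1(ZM), A).  Since the differential kills [v] (both augmentation terms equal
  v_*[ ]), it kills all of B^{k+1}(ZM)_{k+1}; hence there are no nontrivial coboundaries on either
  side and both cohomology groups are these cocycle groups.
\<close>

definition frag_map :: "('a \<Rightarrow> 'b) \<Rightarrow> ('a \<Rightarrow>\<^sub>0 int) \<Rightarrow> ('b \<Rightarrow>\<^sub>0 int)" where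
  "frag_map g c = frag_extend (frag_of \<circ> g) c"

lemma frag_map_0 [simp]: "frag_map g 0 = 0"
  by (simp add: frag_map_def)

lemma frag_map_of [simp]: "frag_map g (frag_of a) = frag_of (g a)"
  by (simp add: frag_map_def)

lemma frag_map_add: "frag_map g (a + b) = frag_map g a + frag_map g b"
  by (simp add: frag_map_def frag_extend_add)

lemma frag_map_diff: "frag_map g (a - b) = frag_map g a - frag_map g b"
  by (simp add: frag_map_def frag_extend_diff)

lemma frag_map_cmul: "frag_map g (frag_cmul s c) = frag_cmul s (frag_map g c)"
  by (simp add: frag_map_def frag_extend_cmul)

lemma frag_map_comp: "frag_map f (frag_map g c) = frag_map (f \<circ> g) c"
  by (simp add: frag_map_def frag_extend_compose comp_assoc)

lemma frag_map_cong: "(\<And>a. a \<in> Poly_Mapping.keys c \<Longrightarrow> f a = g a) \<Longrightarrow> frag_map f c = frag_map g c"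
  unfolding frag_map_def by (rule frag_extend_eq) simp

lemma frag_map_id_on_keys: "(\<And>a. a \<in> Poly_Mapping.keys c \<Longrightarrow> g a = a) \<Longrightarrow> frag_map g c = c"
  using frag_map_cong[of c g id] frag_expansion[of c] by (simp add: frag_map_def)

lemma keys_frag_map: "Poly_Mapping.keys (frag_map g c) \<subseteq> g ` Poly_Mapping.keys c"
  unfolding frag_map_def using keys_frag_extend[of "frag_of \<circ> g" c] by auto

lemma frag_extend_frag_map: "frag_extend F (frag_map g c) = frag_extend (F \<circ> g) c"
  by (simp add: frag_map_def frag_extend_compose)

lemma frag_map_frag_extend: "frag_map g (frag_extend F c) = frag_extend (\<lambda>a. frag_map g (F a)) c"
  using subset_UNIV by (induction c rule: frag_induction) (auto simp: frag_map_diff frag_extend_diff)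

lemma frag_extend_cmul_fun: "frag_extend (\<lambda>a. frag_cmul s (F a)) c = frag_cmul s (frag_extend F c)"
  by (simp add: frag_extend_def frag_cmul_sum mult.commute)

lemma pushc_eq_frag_map: "pushc y c = frag_map (\<lambda>(u, g). (y * u, g)) c"
  unfolding pushc_def frag_map_def by (rule frag_extend_eq) (auto split: prod.splits)

section \<open>Iterated one-letter brackets\<close>

fun wrap :: "nat \<Rightarrow> 'm gen \<Rightarrow> 'm gen" where
  "wrap 0 g = g"
| "wrap (Suc k) g = W [wrap k g]"

fun unwrap :: "nat \<Rightarrow> 'm gen \<Rightarrow> 'm gen" where
  "unwrap 0 g = g"
| "unwrap (Suc k) g = unwrap k (hd (glist g))"

lemma unwrap_wrap [simp]: "unwrap k (wrap k g) = g"
  by (induct k) auto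

lemma wt_wrap [simp]: "wt (wrap k g) = wt g"
  by (induct k) auto

lemma deg_wrap [simp]: "deg (wrap k g) = k + deg g"
  by (induct k) auto

lemma isunit_Suc: "isunit (Suc k) h \<longleftrightarrow> h = W []"
  by (simp add: isunit_def)

lemma valid_Suc0_iff: "valid (Suc 0) g \<longleftrightarrow> (\<exists>vs. g = W (map Z vs) \<and> 1 \<notin> set vs)"
proof
  assume "valid (Suc 0) g"
  then obtain gs where gs: "g = W gs" "\<forall>h\<in>set gs. (\<exists>v. h = Z v) \<and> h \<noteq> Z 1"
    by (auto simp: isunit_def)
  from gs(2) have "map Z (map zval gs) = gs"
    by (induct gs) auto
  with gs show "\<exists>vs. g = W (map Z vs) \<and> 1 \<notin> set vs"
    by (intro exI[of _ "map zval gs"]) auto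
qed (auto simp: isunit_def)

lemma deg_W_map_Z [simp]: "deg (W (map Z vs)) = length vs"
  by (induct vs) auto

lemma valid_deg_ge: "valid (Suc k) g \<Longrightarrow> \<not> isunit (Suc k) g \<Longrightarrow> Suc k \<le> deg g"
proof (induct k arbitrary: g)
  case 0
  then obtain gs where "g = W gs" "gs \<noteq> []"
    by (auto simp: isunit_def)
  then show ?case
    by (cases gs) auto
next
  case (Suc k)
  then obtain gs where gs: "g = W gs" "gs \<noteq> []"
    and letters: "\<forall>h\<in>set gs. valid (Suc k) h \<and> \<not> isunit (Suc k) h"
    by (auto simp: isunit_Suc)
  then obtain h gs' where "gs = h # gs'"
    by (cases gs) auto
  then show ?case
    using gs letters Suc.hyps[of h] by simp
qed

lemma sum_list_deg_ge: "(\<And>h. h \<in> set gs \<Longrightarrow> m \<le> deg h) \<Longrightarrow> length gs * m \<le> sum_list (map deg gs)"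
  by (induct gs) (auto simp: add_mono)

lemma wrap_ne_unit: "0 < deg h \<Longrightarrow> wrap k h \<noteq> W []"
  by (cases k) auto

lemma valid_low_deg_iff_wrap:
  assumes "d < 2"
  shows "valid (Suc k) g \<and> deg g = Suc k + d \<longleftrightarrow> (\<exists>h. g = wrap k h \<and> valid (Suc 0) h \<and> deg h = Suc d)"
proof (induct k arbitrary: g)
  case 0
  show ?case by auto
next
  case (Suc k)
  show ?case
  proof
    assume g: "valid (Suc (Suc k)) g \<and> deg g = Suc (Suc k) + d"
    then obtain gs where gs: "g = W gs"
      and letters: "\<And>h. h \<in> set gs \<Longrightarrow> valid (Suc k) h \<and> \<not> isunit (Suc k) h"
      by auto
    have "length gs * Suc k \<le> sum_list (map deg gs)"
      using letters valid_deg_ge by (blast intro: sum_list_deg_ge)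
    moreover have "length gs + sum_list (map deg gs) = Suc (Suc k) + d"
      using g gs by simp
    ultimately have "length gs = 1"
      using assms by (cases "length gs"; cases "length gs - 1"; auto)
    then obtain h' where "gs = [h']"
      by (auto simp: length_Suc_conv)
    with g gs letters Suc.hyps[of h'] show "\<exists>h. g = wrap (Suc k) h \<and> valid (Suc 0) h \<and> deg h = Suc d"
      by auto
  next
    assume "\<exists>h. g = wrap (Suc k) h \<and> valid (Suc 0) h \<and> deg h = Suc d"
    then obtain h where h: "g = W [wrap k h]" "valid (Suc 0) h" "deg h = Suc d"
      by auto
    then show "valid (Suc (Suc k)) g \<and> deg g = Suc (Suc k) + d"
      using Suc.hyps[of "wrap k h"] wrap_ne_unit[of h k] by (auto simp: isunit_Suc)
  qed
qed

lemma valid_Suc0_deg_one_iff: "valid (Suc 0) h \<and> deg h = Suc 0 \<longleftrightarrow> (\<exists>v. v \<noteq> 1 \<and> h = W [Z v])"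
proof
  assume "valid (Suc 0) h \<and> deg h = Suc 0"
  then obtain vs where "h = W (map Z vs)" "1 \<notin> set vs" "length vs = Suc 0"
    by (metis valid_Suc0_iff deg_W_map_Z)
  then show "\<exists>v. v \<noteq> 1 \<and> h = W [Z v]"
    by (auto simp: length_Suc_conv)
qed (auto simp: isunit_def)

lemma valid_Suc0_deg_two_iff:
  "valid (Suc 0) h \<and> deg h = 2 \<longleftrightarrow> (\<exists>a b. a \<noteq> 1 \<and> b \<noteq> 1 \<and> h = W [Z a, Z b])"
proof
  assume "valid (Suc 0) h \<and> deg h = 2"
  then obtain vs where "h = W (map Z vs)" "1 \<notin> set vs" "length vs = 2"
    by (metis valid_Suc0_iff deg_W_map_Z)
  then show "\<exists>a b. a \<noteq> 1 \<and> b \<noteq> 1 \<and> h = W [Z a, Z b]"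
    by (auto simp: length_Suc_conv numeral_2_eq_2)
qed (auto simp: isunit_def)

lemma wrap_Cons_ne_unit [simp]: "wrap k (W (g # gs)) \<noteq> W []"
  by (cases k) auto

lemma glist_wrap_Cons_ne_Nil [simp]: "glist (wrap k (W (g # gs))) \<noteq> []"
  by (cases k) auto

lemma bdg_single_letter:
  "glist h \<noteq> [] \<Longrightarrow> bdg (Suc (Suc k)) (W [h]) =
     - frag_extend (\<lambda>(u, h'). if h' = W [] then 0 else frag_of (u, W [h'])) (bdg (Suc k) h)"
  unfolding bdg.simps(2)[of "Suc k" "W [h]"]
  by (simp add: Let_def Eidx_def eps_def isunit_Suc del: bdg.simps)
    (rule frag_extend_eq, auto split: prod.splits)

lemma bdg_wrap_letter: "bdg (Suc k) (wrap k (W [Z v])) = 0"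
proof (induct k)
  case 0
  show ?case
    by (simp add: Eidx_def eps_def)
next
  case (Suc k)
  then show ?case
    by (simp add: bdg_single_letter del: bdg.simps)
qed

lemma bdg_wrap_pair: "bdg (Suc k) (wrap k (W [Z a, Z b])) = frag_cmul ((-1)^k)
   (frag_of (a, wrap k (W [Z b])) - (if a * b = 1 then 0 else frag_of (1, wrap k (W [Z (a * b)])))
    + frag_of (b, wrap k (W [Z a])))"
proof (induct k)
  case 0
  show ?case
    by (simp add: Eidx_def eps_def gmul_def isunit_def)
next
  case (Suc k)
  show ?case
    using Suc by (simp add: bdg_single_letter frag_extend_cmul frag_extend_add frag_extend_diff del: bdg.simps)
qed

section \<open>Chains of B^{k+1}(ZM) in degrees k+1 and k+2\<close>

lemma Bcar_iff: "c \<in> Bcar r n x \<longleftrightarrow>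
    (\<forall>p \<in> Poly_Mapping.keys c. valid r (snd p) \<and> deg (snd p) = n \<and> fst p * wt (snd p) = x)"
  by (auto simp: Bcar_def)

lemma Bcar_0 [simp]: "0 \<in> Bcar r n x"
  by (simp add: Bcar_iff)

lemma Bcar_add: "c \<in> Bcar r n x \<Longrightarrow> d \<in> Bcar r n x \<Longrightarrow> c + d \<in> Bcar r n x"
  using keys_add[of c d] unfolding Bcar_iff by blast

lemma Bcar_diff: "c \<in> Bcar r n x \<Longrightarrow> d \<in> Bcar r n x \<Longrightarrow> c - d \<in> Bcar r n x"
  using keys_diff[of c d] unfolding Bcar_iff by blast

lemma Bcar_cmul: "c \<in> Bcar r n x \<Longrightarrow> frag_cmul s c \<in> Bcar r n x"
  unfolding Bcar_iff by simp

lemma frag_of_in_Bcar_iff: "frag_of (u, g) \<in> Bcar r n x \<longleftrightarrow> valid r g \<and> deg g = n \<and> u * wt g = x"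
  unfolding Bcar_iff by simp

lemma frag_map_in_Bcar:
  "(\<And>p. p \<in> Poly_Mapping.keys c \<Longrightarrow> frag_of (g p) \<in> Bcar r n x) \<Longrightarrow> frag_map g c \<in> Bcar r n x"
  using keys_frag_map[of g c] unfolding Bcar_iff by fastforce

lemma frag_extend_in_Bcar:
  "Poly_Mapping.keys c \<subseteq> K \<Longrightarrow> (\<And>p. p \<in> K \<Longrightarrow> F p \<in> Bcar r n x) \<Longrightarrow> frag_extend F c \<in> Bcar r n x"
  by (induction c rule: frag_induction) (auto simp: frag_extend_diff intro: Bcar_diff)

lemma pushc_in_Bcar: "c \<in> Bcar r n x \<Longrightarrow> pushc y c \<in> Bcar r n (x * y)"
  unfolding pushc_eq_frag_map by (rule frag_map_in_Bcar) (auto simp: Bcar_iff mult_ac)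

definition chain_wrap :: "nat \<Rightarrow> 'm chain \<Rightarrow> 'm chain" where
  "chain_wrap k = frag_map (\<lambda>(u, g). (u, wrap k g))"

definition chain_unwrap :: "nat \<Rightarrow> 'm chain \<Rightarrow> 'm chain" where
  "chain_unwrap k = frag_map (\<lambda>(u, g). (u, unwrap k g))"

lemma chain_unwrap_wrap [simp]: "chain_unwrap k (chain_wrap k c) = c"
  unfolding chain_unwrap_def chain_wrap_def frag_map_comp
  by (rule frag_map_id_on_keys) (auto split: prod.splits)

lemma pushc_frag_cmul: "pushc y (frag_cmul s c) = frag_cmul s (pushc y c)"
  by (simp add: pushc_eq_frag_map frag_map_cmul)

lemma pushc_chain_wrap: "pushc y (chain_wrap k c) = chain_wrap k (pushc y c)"
  unfolding chain_wrap_def pushc_eq_frag_map frag_map_comp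
  by (rule frag_map_cong) (auto split: prod.splits)

lemma pushc_chain_unwrap: "pushc y (chain_unwrap k c) = chain_unwrap k (pushc y c)"
  unfolding chain_unwrap_def pushc_eq_frag_map frag_map_comp
  by (rule frag_map_cong) (auto split: prod.splits)

lemma Bcar_low_deg_keys:
  assumes "c \<in> Bcar (Suc k) (Suc k + d) x" "d < 2" "p \<in> Poly_Mapping.keys c"
  obtains h where "snd p = wrap k h" "valid (Suc 0) h" "deg h = Suc d" "fst p * wt h = x"
  using assms valid_low_deg_iff_wrap[of d k "snd p"] unfolding Bcar_iff by fastforce

lemma chain_wrap_in_Bcar:
  assumes "c \<in> Bcar (Suc 0) (Suc d) x" "d < 2"
  shows "chain_wrap k c \<in> Bcar (Suc k) (Suc k + d) x"
  unfolding chain_wrap_def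
proof (rule frag_map_in_Bcar)
  fix p assume "p \<in> Poly_Mapping.keys c"
  then have "valid (Suc k) (wrap k (snd p)) \<and> deg (wrap k (snd p)) = Suc k + d" "fst p * wt (snd p) = x"
    using assms valid_low_deg_iff_wrap[of d k "wrap k (snd p)"] unfolding Bcar_iff by blast+
  then show "frag_of ((\<lambda>(u, g). (u, wrap k g)) p) \<in> Bcar (Suc k) (Suc k + d) x"
    by (cases p) (simp add: frag_of_in_Bcar_iff)
qed

lemma chain_unwrap_in_Bcar:
  assumes "c \<in> Bcar (Suc k) (Suc k + d) x" "d < 2"
  shows "chain_unwrap k c \<in> Bcar (Suc 0) (Suc d) x"
  unfolding chain_unwrap_def
proof (rule frag_map_in_Bcar)
  fix p assume "p \<in> Poly_Mapping.keys c"
  with assms obtain h where "snd p = wrap k h" "valid (Suc 0) h" "deg h = Suc d" "fst p * wt h = x"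
    by (rule Bcar_low_deg_keys)
  then show "frag_of ((\<lambda>(u, g). (u, unwrap k g)) p) \<in> Bcar (Suc 0) (Suc d) x"
    by (cases p) (simp add: frag_of_in_Bcar_iff)
qed

lemma chain_wrap_level_in_Bcar: "c \<in> Bcar (Suc 0) (Suc 0) x \<Longrightarrow> chain_wrap k c \<in> Bcar (Suc k) (Suc k) x"
  using chain_wrap_in_Bcar[of c 0 x k] by simp

lemma chain_unwrap_level_in_Bcar: "c \<in> Bcar (Suc k) (Suc k) x \<Longrightarrow> chain_unwrap k c \<in> Bcar (Suc 0) (Suc 0) x"
  using chain_unwrap_in_Bcar[of c k 0 x] by simp

lemma chain_wrap_unwrap:
  assumes "c \<in> Bcar (Suc k) (Suc k + d) x" "d < 2"
  shows "chain_wrap k (chain_unwrap k c) = c"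
  unfolding chain_unwrap_def chain_wrap_def frag_map_comp
proof (rule frag_map_id_on_keys)
  fix p assume "p \<in> Poly_Mapping.keys c"
  with assms obtain h where "snd p = wrap k h"
    by (rule Bcar_low_deg_keys)
  then show "((\<lambda>(u, g). (u, wrap k g)) \<circ> (\<lambda>(u, g). (u, unwrap k g))) p = p"
    by (cases p) auto
qed

lemma bdg_wrap:
  assumes "valid (Suc 0) h" "deg h = Suc d" "d < 2"
  shows "bdg (Suc k) (wrap k h) = frag_cmul ((-1)^k) (chain_wrap k (bdg (Suc 0) h))"
proof (cases d)
  case 0
  with assms obtain v where "h = W [Z v]"
    using valid_Suc0_deg_one_iff by blast
  then show ?thesis
    using bdg_wrap_letter[of k v] bdg_wrap_letter[of 0 v] by (simp add: chain_wrap_def del: bdg.simps)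
next
  case (Suc d')
  with assms have "valid (Suc 0) h \<and> deg h = 2"
    by simp
  then obtain a b where "h = W [Z a, Z b]"
    using valid_Suc0_deg_two_iff by blast
  then show ?thesis
    using bdg_wrap_pair[of k a b] bdg_wrap_pair[of 0 a b]
    by (simp add: chain_wrap_def frag_map_add frag_map_diff del: bdg.simps)
qed

lemma bdc_chain_wrap:
  assumes "c \<in> Bcar (Suc 0) (Suc d) x" "d < 2"
  shows "bdc (Suc k) (chain_wrap k c) = frag_cmul ((-1)^k) (chain_wrap k (bdc (Suc 0) c))"
proof -
  have "bdc (Suc k) (chain_wrap k c) = frag_extend (\<lambda>(u, h). pushc u (bdg (Suc k) (wrap k h))) c"
    unfolding bdc_def chain_wrap_def frag_extend_frag_map
    by (rule frag_extend_eq) (simp add: split_beta del: bdg.simps)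
  also have "\<dots> = frag_extend (\<lambda>p. frag_cmul ((-1)^k) (chain_wrap k ((\<lambda>(u, h). pushc u (bdg (Suc 0) h)) p))) c"
  proof (rule frag_extend_eq)
    fix p assume "p \<in> Poly_Mapping.keys c"
    moreover obtain u h where p: "p = (u, h)"
      by fastforce
    ultimately have "valid (Suc 0) h" "deg h = Suc d"
      using assms(1) unfolding Bcar_iff by auto
    then have "bdg (Suc k) (wrap k h) = frag_cmul ((-1)^k) (chain_wrap k (bdg (Suc 0) h))"
      using assms(2) by (rule bdg_wrap)
    then show "(\<lambda>(u, h). pushc u (bdg (Suc k) (wrap k h))) p =
        frag_cmul ((-1)^k) (chain_wrap k ((\<lambda>(u, h). pushc u (bdg (Suc 0) h)) p))"
      by (simp add: p pushc_frag_cmul pushc_chain_wrap del: bdg.simps)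
  qed
  also have "\<dots> = frag_cmul ((-1)^k) (chain_wrap k (bdc (Suc 0) c))"
    unfolding frag_extend_cmul_fun bdc_def chain_wrap_def frag_map_frag_extend ..
  finally show ?thesis .
qed

lemma bdc_level_eq_0:
  assumes c: "c \<in> Bcar (Suc k) (Suc k) x"
  shows "bdc (Suc k) c = 0"
  unfolding bdc_def
proof (rule frag_extend_eq_0)
  fix p assume p: "p \<in> Poly_Mapping.keys c"
  from c have "c \<in> Bcar (Suc k) (Suc k + 0) x"
    by simp
  then obtain h where "snd p = wrap k h" "valid (Suc 0) h" "deg h = Suc 0" "fst p * wt h = x"
    by (rule Bcar_low_deg_keys[OF _ zero_less_numeral p])
  then obtain v where "snd p = wrap k (W [Z v])"
    by (metis valid_Suc0_deg_one_iff)
  then show "(\<lambda>(u, g). pushc u (bdg (Suc k) g)) p = 0"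
    by (cases p) (simp add: bdg_wrap_letter pushc_def del: bdg.simps)
qed

lemma bdc_Suc0_in_Bcar:
  assumes "c \<in> Bcar (Suc 0) (Suc (Suc 0)) x"
  shows "bdc (Suc 0) c \<in> Bcar (Suc 0) (Suc 0) x"
  unfolding bdc_def
proof (rule frag_extend_in_Bcar[OF subset_refl])
  fix p assume "p \<in> Poly_Mapping.keys c"
  moreover obtain u h where p: "p = (u, h)"
    by fastforce
  ultimately have "valid (Suc 0) h \<and> deg h = 2" and ux: "u * wt h = x"
    using assms unfolding Bcar_iff by (auto simp: numeral_2_eq_2)
  then obtain a b where h: "h = W [Z a, Z b]" "a \<noteq> 1" "b \<noteq> 1"
    using valid_Suc0_deg_two_iff by blast
  have letter: "frag_of (w, W [Z v]) \<in> Bcar (Suc 0) (Suc 0) x" if "v \<noteq> 1" "w * v = x" for v w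
    using that valid_Suc0_deg_one_iff[of "W [Z v]"] by (simp add: frag_of_in_Bcar_iff)
  have "(if a * b = 1 then 0 else frag_of (u, W [Z (a * b)])) \<in> Bcar (Suc 0) (Suc 0) x"
    using letter[of "a * b" u] h ux by simp
  then have "frag_of (u * a, W [Z b]) - (if a * b = 1 then 0 else frag_of (u, W [Z (a * b)]))
      + frag_of (u * b, W [Z a]) \<in> Bcar (Suc 0) (Suc 0) x"
    using h ux by (intro Bcar_add Bcar_diff letter) (auto simp: mult_ac)
  moreover have "pushc u (bdg (Suc 0) (W [Z a, Z b])) =
     frag_of (u * a, W [Z b]) - (if a * b = 1 then 0 else frag_of (u, W [Z (a * b)])) + frag_of (u * b, W [Z a])"
    using bdg_wrap_pair[of 0 a b] by (simp add: pushc_eq_frag_map frag_map_add frag_map_diff del: bdg.simps)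
  ultimately show "(\<lambda>(u, g). pushc u (bdg (Suc 0) g)) p \<in> Bcar (Suc 0) (Suc 0) x"
    using p h by simp
qed

lemma bdc_low_deg_in_Bcar:
  assumes "c \<in> Bcar (Suc k) (Suc (Suc k)) x"
  shows "bdc (Suc k) c \<in> Bcar (Suc k) (Suc k) x"
proof -
  have c: "c \<in> Bcar (Suc k) (Suc k + 1) x" and d: "(1::nat) < 2"
    using assms by simp_all
  have unwrapped: "chain_unwrap k c \<in> Bcar (Suc 0) (Suc (Suc 0)) x"
    using chain_unwrap_in_Bcar[OF c d] by simp
  have "bdc (Suc k) c = bdc (Suc k) (chain_wrap k (chain_unwrap k c))"
    using chain_wrap_unwrap[OF c d] by simp
  also have "\<dots> = frag_cmul ((-1)^k) (chain_wrap k (bdc (Suc 0) (chain_unwrap k c)))"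
    using bdc_chain_wrap[OF unwrapped] by simp
  also have "\<dots> \<in> Bcar (Suc k) (Suc k) x"
    using chain_wrap_in_Bcar[OF bdc_Suc0_in_Bcar[OF unwrapped], where k = k] by (simp add: Bcar_cmul)
  finally show ?thesis .
qed

section \<open>Cochains and their pullbacks\<close>

lemma HM_module_group: "HM_module Ag Ap \<Longrightarrow> group (Ag x)"
  unfolding HM_module_def using comm_group.axioms(2) by blast

lemma HM_module_push_one: "HM_module Ag Ap \<Longrightarrow> Ap x y \<one>\<^bsub>Ag x\<^esub> = \<one>\<^bsub>Ag (x * y)\<^esub>"
  by (rule hom_one) (auto simp: HM_module_def intro: HM_module_group)

lemma Cochains_closed: "f \<in> Cochains r n Ag Ap \<Longrightarrow> c \<in> Bcar r n x \<Longrightarrow> f x c \<in> carrier (Ag x)"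
  unfolding Cochains_def hom_def Bgrp_def by auto

lemma Cochains_add:
  "f \<in> Cochains r n Ag Ap \<Longrightarrow> c \<in> Bcar r n x \<Longrightarrow> d \<in> Bcar r n x \<Longrightarrow> f x (c + d) = f x c \<otimes>\<^bsub>Ag x\<^esub> f x d"
  unfolding Cochains_def hom_def Bgrp_def by auto

lemma Cochains_pushc: "f \<in> Cochains r n Ag Ap \<Longrightarrow> c \<in> Bcar r n x \<Longrightarrow> f (x * y) (pushc y c) = Ap x y (f x c)"
  unfolding Cochains_def by auto

lemma Cochains_undefined: "f \<in> Cochains r n Ag Ap \<Longrightarrow> c \<notin> Bcar r n x \<Longrightarrow> f x c = undefined"
  unfolding Cochains_def by auto

lemma Cochains_zero:
  assumes "HM_module Ag Ap" "f \<in> Cochains r n Ag Ap"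
  shows "f x 0 = \<one>\<^bsub>Ag x\<^esub>"
proof -
  have "f x 0 = f x 0 \<otimes>\<^bsub>Ag x\<^esub> f x 0"
    using Cochains_add[OF assms(2) Bcar_0 Bcar_0] by simp
  then show ?thesis
    using group.l_cancel_one'[OF HM_module_group[OF assms(1)]] Cochains_closed[OF assms(2) Bcar_0] by simp
qed

lemma Cochains_sign_eq_one:
  assumes HM: "HM_module Ag Ap" and f: "f \<in> Cochains r n Ag Ap" and d: "d \<in> Bcar r n x"
  shows "f x (frag_cmul ((-1)^j) d) = \<one>\<^bsub>Ag x\<^esub> \<longleftrightarrow> f x d = \<one>\<^bsub>Ag x\<^esub>"
proof (cases "even j")
  case False
  have md: "-d \<in> Bcar r n x"
    using d by (simp add: Bcar_cmul flip: frag_cmul_minus_one)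
  then have "f x d \<otimes>\<^bsub>Ag x\<^esub> f x (-d) = \<one>\<^bsub>Ag x\<^esub>"
    using Cochains_add[OF f d md] Cochains_zero[OF HM f] by simp
  with False show ?thesis
    using HM_module_group[OF HM, of x] Cochains_closed[OF f d] Cochains_closed[OF f md]
    by (auto simp: group.is_monoid monoid.l_one monoid.r_one)
qed simp

lemma cocycles_iff: "f \<in> cocycles r n Ag Ap \<longleftrightarrow>
   f \<in> Cochains r n Ag Ap \<and> (\<forall>x c. c \<in> Bcar r (Suc n) x \<longrightarrow> f x (bdc r c) = \<one>\<^bsub>Ag x\<^esub>)"
  unfolding cocycles_def cobd_def Cgrp_def by (auto simp: fun_eq_iff)

lemma one_Cochains: "HM_module Ag Ap \<Longrightarrow> \<one>\<^bsub>Cgrp r n Ag Ap\<^esub> \<in> Cochains r n Ag Ap"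
  unfolding Cochains_def hom_def Bgrp_def Cgrp_def
  using HM_module_group HM_module_push_one
  by (fastforce simp: group.is_monoid monoid.one_closed monoid.l_one Bcar_add pushc_in_Bcar)

lemma Cgrp_one_mult:
  assumes "HM_module Ag Ap" "f \<in> Cochains r n Ag Ap"
  shows "\<one>\<^bsub>Cgrp r n Ag Ap\<^esub> \<otimes>\<^bsub>Cgrp r n Ag Ap\<^esub> f = f"
  using Cochains_closed[OF assms(2)] Cochains_undefined[OF assms(2)] HM_module_group[OF assms(1)]
  by (auto simp: Cgrp_def fun_eq_iff group.is_monoid monoid.l_one)

lemma coboundaries_level:
  assumes "HM_module Ag Ap"
  shows "coboundaries (Suc k) (Suc k) Ag Ap = {\<one>\<^bsub>Cgrp (Suc k) (Suc k) Ag Ap\<^esub>}"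
proof -
  have "cobd (Suc k) k f = \<one>\<^bsub>Cgrp (Suc k) (Suc k) Ag Ap\<^esub>" if "f \<in> Cochains (Suc k) k Ag Ap" for f
    unfolding cobd_def Cgrp_def by (auto simp: fun_eq_iff bdc_level_eq_0 Cochains_zero[OF assms that])
  moreover have "Cochains (Suc k) k Ag Ap \<noteq> {}"
    using one_Cochains[OF assms] by blast
  ultimately show ?thesis
    by (auto simp: coboundaries_def)
qed

definition cochain_pullback ::
    "nat \<Rightarrow> nat \<Rightarrow> ('m::comm_monoid_mult chain \<Rightarrow> 'm chain) \<Rightarrow> ('m \<Rightarrow> 'm chain \<Rightarrow> 'a) \<Rightarrow> ('m \<Rightarrow> 'm chain \<Rightarrow> 'a)" where
  "cochain_pullback r n L f = (\<lambda>x c. if c \<in> Bcar r n x then f x (L c) else undefined)"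

lemma cochain_pullback_Cochains:
  assumes f: "f \<in> Cochains r n Ag Ap"
    and maps: "\<And>x c. c \<in> Bcar r' n' x \<Longrightarrow> L c \<in> Bcar r n x"
    and add: "\<And>a b. L (a + b) = L a + L b"
    and push: "\<And>y c. L (pushc y c) = pushc y (L c)"
  shows "cochain_pullback r' n' L f \<in> Cochains r' n' Ag Ap"
  unfolding Cochains_def hom_def Bgrp_def cochain_pullback_def
  using Cochains_closed[OF f maps] Cochains_add[OF f maps maps] Cochains_pushc[OF f maps]
  by (auto simp: add push Bcar_add pushc_in_Bcar)

lemma cochain_pullback_cocycles:
  fixes L :: "'m::comm_monoid_mult chain \<Rightarrow> 'm chain"
  assumes HM: "HM_module Ag Ap" and f: "f \<in> cocycles r n Ag Ap"
    and maps: "\<And>x c. c \<in> Bcar r' n' x \<Longrightarrow> L c \<in> Bcar r n x"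
    and add: "\<And>a b. L (a + b) = L a + L b"
    and push: "\<And>y c. L (pushc y c) = pushc y (L c)"
    and bdc_maps: "\<And>x (c :: 'm chain). c \<in> Bcar r' (Suc n') x \<Longrightarrow> bdc r' c \<in> Bcar r' n' x"
    and bdc_commute: "\<And>x c. c \<in> Bcar r' (Suc n') x \<Longrightarrow>
       \<exists>d j. d \<in> Bcar r (Suc n) x \<and> L (bdc r' c) = frag_cmul ((-1)^j) (bdc r d)"
  shows "cochain_pullback r' n' L f \<in> cocycles r' n' Ag Ap"
proof -
  have fC: "f \<in> Cochains r n Ag Ap" and cycle: "\<And>x d. d \<in> Bcar r (Suc n) x \<Longrightarrow> f x (bdc r d) = \<one>\<^bsub>Ag x\<^esub>"
    using f by (auto simp: cocycles_iff)
  have "f x (L (bdc r' c)) = \<one>\<^bsub>Ag x\<^esub>" if c: "c \<in> Bcar r' (Suc n') x" for x c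
  proof -
    obtain d j where d: "d \<in> Bcar r (Suc n) x" and eq: "L (bdc r' c) = frag_cmul ((-1)^j) (bdc r d)"
      using bdc_commute[OF c] by blast
    have "bdc r d = frag_cmul ((-1)^j) (L (bdc r' c))"
      by (simp add: eq flip: power_mult_distrib)
    moreover have "L (bdc r' c) \<in> Bcar r n x"
      using bdc_maps[OF c] by (rule maps)
    ultimately have "bdc r d \<in> Bcar r n x"
      by (simp add: Bcar_cmul)
    then show ?thesis
      using Cochains_sign_eq_one[OF HM fC] cycle[OF d] eq by simp
  qed
  then show ?thesis
    using cochain_pullback_Cochains[OF fC maps add push] bdc_maps
    by (simp add: cocycles_iff cochain_pullback_def)
qed

lemma cochain_pullback_mult:
  assumes "\<And>x c. c \<in> Bcar r' n' x \<Longrightarrow> L c \<in> Bcar r n x"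
  shows "cochain_pullback r' n' L (f \<otimes>\<^bsub>Cgrp r n Ag Ap\<^esub> g) =
    cochain_pullback r' n' L f \<otimes>\<^bsub>Cgrp r' n' Ag Ap\<^esub> cochain_pullback r' n' L g"
  using assms by (auto simp: cochain_pullback_def Cgrp_def fun_eq_iff)

lemma cochain_pullback_inverse:
  assumes "f \<in> Cochains r n Ag Ap"
    and "\<And>x c. c \<in> Bcar r n x \<Longrightarrow> L' c \<in> Bcar r' n' x \<and> L (L' c) = c"
  shows "cochain_pullback r n L' (cochain_pullback r' n' L f) = f"
  using assms Cochains_undefined[OF assms(1)] by (auto simp: cochain_pullback_def fun_eq_iff)

lemma chain_wrap_add: "chain_wrap k (a + b) = chain_wrap k a + chain_wrap k b"
  by (simp add: chain_wrap_def frag_map_add)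

lemma chain_unwrap_add: "chain_unwrap k (a + b) = chain_unwrap k a + chain_unwrap k b"
  by (simp add: chain_unwrap_def frag_map_add)

lemma chain_unwrap_cmul: "chain_unwrap k (frag_cmul s c) = frag_cmul s (chain_unwrap k c)"
  by (simp add: chain_unwrap_def frag_map_cmul)

lemma cochain_pullback_wrap_cocycles:
  assumes HM: "HM_module Ag Ap" and f: "f \<in> cocycles (Suc k) (Suc k) Ag Ap"
  shows "cochain_pullback (Suc 0) (Suc 0) (chain_wrap k) f \<in> cocycles (Suc 0) (Suc 0) Ag Ap"
proof (rule cochain_pullback_cocycles[OF HM f])
  show "chain_wrap k c \<in> Bcar (Suc k) (Suc k) x" if "c \<in> Bcar (Suc 0) (Suc 0) x" for x c
    using that by (rule chain_wrap_level_in_Bcar)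
  show "bdc (Suc 0) c \<in> Bcar (Suc 0) (Suc 0) x" if "c \<in> Bcar (Suc 0) (Suc (Suc 0)) x" for x c
    using bdc_low_deg_in_Bcar[OF that] .
  show "\<exists>d j. d \<in> Bcar (Suc k) (Suc (Suc k)) x \<and>
      chain_wrap k (bdc (Suc 0) c) = frag_cmul ((-1)^j) (bdc (Suc k) d)"
    if c: "c \<in> Bcar (Suc 0) (Suc (Suc 0)) x" for x c
  proof (intro exI conjI)
    show "chain_wrap k c \<in> Bcar (Suc k) (Suc (Suc k)) x"
      using chain_wrap_in_Bcar[OF c] by simp
    show "chain_wrap k (bdc (Suc 0) c) = frag_cmul ((-1)^k) (bdc (Suc k) (chain_wrap k c))"
      using bdc_chain_wrap[OF c] by (simp flip: power_mult_distrib)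
  qed
qed (simp_all add: chain_wrap_add pushc_chain_wrap)

lemma cochain_pullback_unwrap_cocycles:
  assumes HM: "HM_module Ag Ap" and g: "g \<in> cocycles (Suc 0) (Suc 0) Ag Ap"
  shows "cochain_pullback (Suc k) (Suc k) (chain_unwrap k) g \<in> cocycles (Suc k) (Suc k) Ag Ap"
proof (rule cochain_pullback_cocycles[OF HM g])
  show "chain_unwrap k c \<in> Bcar (Suc 0) (Suc 0) x" if "c \<in> Bcar (Suc k) (Suc k) x" for x c
    using that by (rule chain_unwrap_level_in_Bcar)
  show "bdc (Suc k) c \<in> Bcar (Suc k) (Suc k) x" if "c \<in> Bcar (Suc k) (Suc (Suc k)) x" for x c
    using bdc_low_deg_in_Bcar[OF that] .
  show "\<exists>d j. d \<in> Bcar (Suc 0) (Suc (Suc 0)) x \<and>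
      chain_unwrap k (bdc (Suc k) c) = frag_cmul ((-1)^j) (bdc (Suc 0) d)"
    if c: "c \<in> Bcar (Suc k) (Suc (Suc k)) x" for x c
  proof (intro exI conjI)
    have c1: "c \<in> Bcar (Suc k) (Suc k + 1) x"
      using c by simp
    show d: "chain_unwrap k c \<in> Bcar (Suc 0) (Suc (Suc 0)) x"
      using chain_unwrap_in_Bcar[OF c1] by simp
    have "bdc (Suc k) c = bdc (Suc k) (chain_wrap k (chain_unwrap k c))"
      using chain_wrap_unwrap[OF c1] by simp
    then show "chain_unwrap k (bdc (Suc k) c) = frag_cmul ((-1)^k) (bdc (Suc 0) (chain_unwrap k c))"
      using bdc_chain_wrap[OF d] by (simp add: chain_unwrap_cmul)
  qed
qed (simp_all add: chain_unwrap_add pushc_chain_unwrap)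

lemma bij_betw_cocycles_level:
  assumes "HM_module Ag Ap"
  shows "bij_betw (cochain_pullback (Suc 0) (Suc 0) (chain_wrap k))
     (cocycles (Suc k) (Suc k) Ag Ap) (cocycles (Suc 0) (Suc 0) Ag Ap)"
proof (rule bij_betwI[where g = "cochain_pullback (Suc k) (Suc k) (chain_unwrap k)"])
  show "cochain_pullback (Suc k) (Suc k) (chain_unwrap k) (cochain_pullback (Suc 0) (Suc 0) (chain_wrap k) f) = f"
    if "f \<in> cocycles (Suc k) (Suc k) Ag Ap" for f
  proof (rule cochain_pullback_inverse)
    show "f \<in> Cochains (Suc k) (Suc k) Ag Ap"
      using that by (simp add: cocycles_iff)
    show "chain_unwrap k c \<in> Bcar (Suc 0) (Suc 0) x \<and> chain_wrap k (chain_unwrap k c) = c"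
      if "c \<in> Bcar (Suc k) (Suc k) x" for x c
      using chain_unwrap_level_in_Bcar[OF that] chain_wrap_unwrap[of c k 0] that by simp
  qed
  show "cochain_pullback (Suc 0) (Suc 0) (chain_wrap k) (cochain_pullback (Suc k) (Suc k) (chain_unwrap k) g) = g"
    if "g \<in> cocycles (Suc 0) (Suc 0) Ag Ap" for g
  proof (rule cochain_pullback_inverse)
    show "g \<in> Cochains (Suc 0) (Suc 0) Ag Ap"
      using that by (simp add: cocycles_iff)
    show "chain_wrap k c \<in> Bcar (Suc k) (Suc k) x \<and> chain_unwrap k (chain_wrap k c) = c"
      if "c \<in> Bcar (Suc 0) (Suc 0) x" for x c
      using chain_wrap_level_in_Bcar[OF that] by simp
  qed
qed (auto simp: cochain_pullback_wrap_cocycles cochain_pullback_unwrap_cocycles assms)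

lemma carrier_Mod_one:
  assumes "\<And>a. a \<in> carrier G \<Longrightarrow> \<one>\<^bsub>G\<^esub> \<otimes>\<^bsub>G\<^esub> a = a"
  shows "carrier (G Mod {\<one>\<^bsub>G\<^esub>}) = (\<lambda>a. {a}) ` carrier G"
  using assms by (auto simp: carrier_FactGroup r_coset_def)

lemma Mod_one_iso:
  assumes G: "\<And>a. a \<in> carrier G \<Longrightarrow> \<one>\<^bsub>G\<^esub> \<otimes>\<^bsub>G\<^esub> a = a"
    and H: "\<And>b. b \<in> carrier H \<Longrightarrow> \<one>\<^bsub>H\<^esub> \<otimes>\<^bsub>H\<^esub> b = b"
    and bij: "bij_betw h (carrier G) (carrier H)"
    and mult: "\<And>a b. a \<in> carrier G \<Longrightarrow> b \<in> carrier G \<Longrightarrow> h (a \<otimes>\<^bsub>G\<^esub> b) = h a \<otimes>\<^bsub>H\<^esub> h b"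
  shows "G Mod {\<one>\<^bsub>G\<^esub>} \<cong> H Mod {\<one>\<^bsub>H\<^esub>}"
proof (rule is_isoI)
  have bij': "bij_betw (image h) (carrier (G Mod {\<one>\<^bsub>G\<^esub>})) (carrier (H Mod {\<one>\<^bsub>H\<^esub>}))"
    using bij by (auto simp: carrier_Mod_one[OF G] carrier_Mod_one[OF H] bij_betw_def inj_on_def image_image)
  have "h ` (S \<otimes>\<^bsub>G Mod {\<one>\<^bsub>G\<^esub>}\<^esub> T) = h ` S \<otimes>\<^bsub>H Mod {\<one>\<^bsub>H\<^esub>}\<^esub> h ` T"
    if "S \<in> carrier (G Mod {\<one>\<^bsub>G\<^esub>})" "T \<in> carrier (G Mod {\<one>\<^bsub>G\<^esub>})" for S T
    using that mult by (auto simp: carrier_Mod_one[OF G] set_mult_def)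
  with bij' show "image h \<in> iso (G Mod {\<one>\<^bsub>G\<^esub>}) (H Mod {\<one>\<^bsub>H\<^esub>})"
    by (auto simp: iso_def hom_def bij_betw_def)
qed

theorem corollary5p7:
  fixes Ag :: "'m::comm_monoid_mult \<Rightarrow> 'a monoid" and Ap :: "'m \<Rightarrow> 'm \<Rightarrow> 'a \<Rightarrow> 'a" and r :: nat
  assumes "HM_module Ag Ap" and "r \<ge> 2"
  shows "HMcoh r r Ag Ap \<cong> HMcoh 1 1 Ag Ap"
proof -
  obtain k where r: "r = Suc k"
    using assms(2) by (cases r) auto
  define Cyc where "Cyc n = (Cgrp n n Ag Ap)\<lparr>carrier := cocycles n n Ag Ap\<rparr>" for n
  have "HMcoh n n Ag Ap = Cyc n Mod {\<one>\<^bsub>Cyc n\<^esub>}" if "n = Suc k \<or> n = Suc 0" for n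
    using that coboundaries_level[OF assms(1)] by (auto simp: HMcoh_def Cyc_def)
  moreover have "Cyc (Suc k) Mod {\<one>\<^bsub>Cyc (Suc k)\<^esub>} \<cong> Cyc (Suc 0) Mod {\<one>\<^bsub>Cyc (Suc 0)\<^esub>}"
  proof (rule Mod_one_iso)
    show "bij_betw (cochain_pullback (Suc 0) (Suc 0) (chain_wrap k)) (carrier (Cyc (Suc k))) (carrier (Cyc (Suc 0)))"
      using bij_betw_cocycles_level[OF assms(1)] by (simp add: Cyc_def)
  qed (auto simp: Cyc_def Cgrp_one_mult[OF assms(1)] cocycles_def cochain_pullback_mult chain_wrap_level_in_Bcar)
  ultimately show ?thesis
    by (simp add: r)
qed

end
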